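(* Let $A\in\mathbb{R}^{n\times n}$ be a range monotone $Z$-matrix with $\mathbb{R}^n_+\cap R(A)\ne\{0\}$. Then the group inverse $A^{\#}$ exists and is a Karamardian matrix.
   Context: A $Z$-matrix is a real square matrix whose off-diagonal entries are nonpositive. A square matrix $M$ is range monotone if $Mx\ge 0$ and $x\in R(M)$ imply $x\ge 0$ (range monotone matrices are group invertible). The group inverse $A^{\#}$ is the unique $X$ with $AXA=A$, $XAX=X$, $AX=XA$; $R(A^{\#})=R(A)$. For $M\in\mathbb{R}^{n\times n}$ let $K_M=\mathbb{R}^n_+\cap R(M)$ and $K_M^*=\{y\in\mathbb{R}^n: x^Ty\ge 0 \text{ for all } x\in K_M\}$ (one has $K_M^*=\mathbb{R}^n_++N(M^T)$, with interior $\{a+b: a>0,\ b\in N(M^T)\}$). For $q\in\mathbb{R}^n$, LCP$(M,K_M,q)$ is to find $x$ with $x\in K_M$, $Mx+q\in K_M^*$, $x^T(Mx+q)=0$. $M$ is a Karamardian matrix if $K_M\ne\{0\}$ and there exists $d$ in the interior of $K_M^*$ such that both LCP$(M,K_M,0)$ and LCP$(M,K_M,d)$ have $x=0$ as their only solution. *)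

theory Defs
  imports "HOL-Analysis.Analysis"
begin

definition nonneg_vec :: "real^'n \<Rightarrow> bool" where
  "nonneg_vec x \<longleftrightarrow> (\<forall>i. 0 \<le> x $ i)"

definition pos_vec :: "real^'n \<Rightarrow> bool" where
  "pos_vec x \<longleftrightarrow> (\<forall>i. 0 < x $ i)"

definition mat_range :: "real^'n^'n \<Rightarrow> (real^'n) set" where
  "mat_range M = range (\<lambda>x. M *v x)"

definition mat_null :: "real^'n^'n \<Rightarrow> (real^'n) set" where
  "mat_null M = {x. M *v x = 0}"

definition Z_matrix :: "real^'n^'n \<Rightarrow> bool" where
  "Z_matrix A \<longleftrightarrow> (\<forall>i j. i \<noteq> j \<longrightarrow> A $ i $ j \<le> 0)"

definition range_monotone :: "real^'n^'n \<Rightarrow> bool" where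
  "range_monotone M \<longleftrightarrow>
     (\<forall>x. nonneg_vec (M *v x) \<and> x \<in> mat_range M \<longrightarrow> nonneg_vec x)"

definition is_group_inverse :: "real^'n^'n \<Rightarrow> real^'n^'n \<Rightarrow> bool" where
  "is_group_inverse A X \<longleftrightarrow> A ** X ** A = A \<and> X ** A ** X = X \<and> A ** X = X ** A"

definition cone_K :: "real^'n^'n \<Rightarrow> (real^'n) set" where
  "cone_K M = {x. nonneg_vec x} \<inter> mat_range M"

definition dual_cone_K :: "real^'n^'n \<Rightarrow> (real^'n) set" where
  "dual_cone_K M = {y. \<forall>x\<in>cone_K M. 0 \<le> x \<bullet> y}"

definition LCP_sol :: "real^'n^'n \<Rightarrow> real^'n \<Rightarrow> (real^'n) set" where
  "LCP_sol M q = {x. x \<in> cone_K M \<and> M *v x + q \<in> dual_cone_K M \<and> x \<bullet> (M *v x + q) = 0}"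

definition karamardian :: "real^'n^'n \<Rightarrow> bool" where
  "karamardian M \<longleftrightarrow> cone_K M \<noteq> {0} \<and>
     (\<exists>d \<in> interior (dual_cone_K M). LCP_sol M 0 = {0} \<and> LCP_sol M d = {0})"

end

theory Submission
  imports Defs
begin

text \<open>
  Range monotonicity forces \<open>R(A) \<inter> N(A) = {0}\<close>, so \<open>A\<close> is injective on its range and
  \<open>R(A\<^sup>2) = R(A)\<close>; writing \<open>A = A\<^sup>2 B\<close>, the matrix \<open>A B\<^sup>2\<close> is the group inverse \<open>A\<^sup>#\<close>.
  Since \<open>A\<^sup>#\<close> has the same range as \<open>A\<close> and inverts \<open>A\<close> there, range monotonicity says
  exactly that \<open>A\<^sup>#\<close> maps \<open>K = \<real>\<^sup>n\<^sub>+ \<inter> R(A)\<close> into \<open>\<real>\<^sup>n\<^sub>+\<close>. Hence \<open>A\<^sup>#\<close> is copositive on \<open>K\<close>,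
  which settles the LCP with a positive vector \<open>d\<close>. For \<open>q = 0\<close>, a solution \<open>x\<close> gives
  \<open>y = A\<^sup># x \<ge> 0\<close> with \<open>A y = x \<ge> 0\<close> and \<open>(A y)\<^sup>T y = 0\<close>; for a Z-matrix this complementarity
  forces \<open>A y = 0\<close>, i.e. \<open>x = 0\<close>.
\<close>

lemma subspace_mat_range: "subspace (mat_range M)"
  unfolding mat_range_def
  by (simp add: linear_subspace_image)

lemma nonneg_vec_0 [simp]: "nonneg_vec 0"
  by (simp add: nonneg_vec_def)

lemma range_monotoneD:
  "range_monotone M \<Longrightarrow> nonneg_vec (M *v x) \<Longrightarrow> x \<in> mat_range M \<Longrightarrow> nonneg_vec x"
  unfolding range_monotone_def by blast

lemma range_monotone_range_null_zero:
  fixes A :: "real^'n^'n"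
  assumes "range_monotone A" "x \<in> mat_range A" "A *v x = 0"
  shows "x = 0"
proof -
  have "- x \<in> mat_range A" using subspace_neg[OF subspace_mat_range assms(2)] .
  moreover have "A *v (- x) = 0" using assms(3) by (simp add: vec.neg)
  ultimately have "nonneg_vec x" "nonneg_vec (- x)"
    using range_monotoneD[OF assms(1)] assms(2,3) by simp_all
  then show ?thesis unfolding nonneg_vec_def by (simp add: vec_eq_iff) (meson antisym neg_0_le_iff_le)
qed

lemma range_monotone_inj_on_range:
  fixes A :: "real^'n^'n"
  assumes "range_monotone A"
  shows "inj_on ((*v) A) (mat_range A)"
proof (rule inj_onI)
  fix x y assume "x \<in> mat_range A" "y \<in> mat_range A" "A *v x = A *v y"
  then have "x - y \<in> mat_range A" "A *v (x - y) = 0"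
    by (simp_all add: subspace_diff[OF subspace_mat_range] matrix_vector_mult_diff_distrib)
  then show "x = y" using range_monotone_range_null_zero[OF assms] by fastforce
qed

lemma mat_range_mult: "mat_range (A ** B) = (*v) A ` mat_range B"
  unfolding mat_range_def by (auto simp: matrix_vector_mul_assoc image_iff)

lemma range_monotone_mat_range_square:
  fixes A :: "real^'n^'n"
  assumes "range_monotone A"
  shows "mat_range (A ** A) = mat_range A"
proof -
  have "dim ((*v) A ` mat_range A) = dim (mat_range A)"
    using range_monotone_inj_on_range[OF assms] span_eq_iff[THEN iffD2, OF subspace_mat_range]
    by (metis dim_image_eq matrix_vector_mul_linear)
  moreover have "(*v) A ` mat_range A \<subseteq> mat_range A"
    by (auto simp: mat_range_def)
  ultimately have "(*v) A ` mat_range A = mat_range A"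
    by (intro subspace_dim_equal subspace_mat_range) (auto simp: mat_range_mult[symmetric] subspace_mat_range)
  then show ?thesis by (simp add: mat_range_mult)
qed

lemma mat_range_subset_factor:
  fixes M N :: "real^'n^'n"
  assumes "mat_range M \<subseteq> mat_range N"
  shows "\<exists>B. N ** B = M"
proof -
  have "column j M \<in> mat_range N" for j
    using assms unfolding mat_range_def by (metis matrix_vector_mult_basis rangeI subsetD)
  then have "\<forall>j. \<exists>w. N *v w = column j M"
    unfolding mat_range_def by (metis rangeE)
  then obtain w where w: "\<And>j. N *v w j = column j M" by metis
  define B where "B = (\<chi> i j. w j $ i)"
  have "(N ** B) $ i $ j = M $ i $ j" for i j
  proof -
    have "(N ** B) $ i $ j = (N *v w j) $ i"
      by (simp add: B_def matrix_matrix_mult_def matrix_vector_mult_def)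
    then show ?thesis by (simp add: w column_def)
  qed
  then have "N ** B = M" by (simp add: vec_eq_iff)
  then show ?thesis by blast
qed

lemma range_monotone_mult_left_cancel:
  fixes A P Q :: "real^'n^'n"
  assumes "range_monotone A" "A ** (A ** P) = A ** (A ** Q)"
  shows "A ** P = A ** Q"
proof -
  have "(A ** P) *v v = (A ** Q) *v v" for v
  proof (rule inj_onD[OF range_monotone_inj_on_range[OF assms(1)]])
    show "A *v ((A ** P) *v v) = A *v ((A ** Q) *v v)"
      using assms(2) by (simp add: matrix_vector_mul_assoc)
    show "(A ** P) *v v \<in> mat_range A" "(A ** Q) *v v \<in> mat_range A"
      unfolding mat_range_def by (simp_all add: matrix_vector_mul_assoc[symmetric])
  qed
  then show ?thesis by (simp add: matrix_eq)
qed

lemma range_monotone_group_inverse_exists: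
  fixes A :: "real^'n^'n"
  assumes "range_monotone A"
  shows "\<exists>X. is_group_inverse A X"
proof -
  obtain B where B: "A ** A ** B = A"
    using mat_range_subset_factor range_monotone_mat_range_square[OF assms] by blast
  have ABA: "A ** B ** A = A"
    using range_monotone_mult_left_cancel[OF assms, of "B ** A" "A ** B"] B
    by (simp add: matrix_mul_assoc)
  have ABBA: "A ** B ** B ** A = A ** B"
    using range_monotone_mult_left_cancel[OF assms, of "B ** B ** A" B] B ABA
    by (simp add: matrix_mul_assoc)
  define X where "X = A ** B ** B"
  have AX: "A ** X = A ** B" using B by (simp add: X_def matrix_mul_assoc)
  have XA: "X ** A = A ** B" using ABBA by (simp add: X_def)
  have "X ** A ** X = X" unfolding XA by (simp add: X_def matrix_mul_assoc ABA)
  then have "is_group_inverse A X"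
    unfolding is_group_inverse_def using AX XA ABA by simp
  then show ?thesis ..
qed

lemma group_inverse_mat_range:
  assumes "is_group_inverse A X"
  shows "mat_range X = mat_range A"
proof -
  have "X = A ** (X ** X)" "A = X ** (A ** A)"
    using assms unfolding is_group_inverse_def by (metis matrix_mul_assoc)+
  then have "mat_range X \<subseteq> mat_range A" "mat_range A \<subseteq> mat_range X"
    by (metis image_subset_iff mat_range_def mat_range_mult rangeI)+
  then show ?thesis by blast
qed

lemma group_inverse_cone_K: "is_group_inverse A X \<Longrightarrow> cone_K X = cone_K A"
  by (simp add: cone_K_def group_inverse_mat_range)

lemma group_inverse_right_inverse_on_range:
  assumes "is_group_inverse A X" "x \<in> mat_range A"
  shows "A *v (X *v x) = x"
proof -
  obtain v where "x = A *v v" using assms(2) unfolding mat_range_def by auto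
  then show ?thesis
    using assms(1) unfolding is_group_inverse_def by (metis matrix_vector_mul_assoc)
qed

lemma range_monotone_group_inverse_nonneg:
  assumes "range_monotone A" "is_group_inverse A X" "x \<in> cone_K A"
  shows "nonneg_vec (X *v x)"
proof (rule range_monotoneD[OF assms(1)])
  show "nonneg_vec (A *v (X *v x))"
    using assms(3) group_inverse_right_inverse_on_range[OF assms(2)] by (simp add: cone_K_def)
  show "X *v x \<in> mat_range A"
    using group_inverse_mat_range[OF assms(2)] by (auto simp: mat_range_def)
qed

lemma Z_matrix_complementary_zero:
  fixes A :: "real^'n^'n"
  assumes Z: "Z_matrix A" and y: "nonneg_vec y" and Ay: "nonneg_vec (A *v y)"
    and orth: "(A *v y) \<bullet> y = 0"
  shows "A *v y = 0"
proof -
  have products: "(A *v y) $ i * y $ i = 0" for i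
    using orth y Ay sum_nonneg_eq_0_iff[of UNIV "\<lambda>i. (A *v y) $ i * y $ i"]
    unfolding nonneg_vec_def inner_vec_def by simp
  have "A $ i $ j * y $ j \<le> 0" if "y $ i = 0" for i j
    using Z y that unfolding Z_matrix_def nonneg_vec_def
    by (cases "j = i") (auto intro: mult_nonpos_nonneg)
  then have nonpos: "(A *v y) $ i \<le> 0" if "y $ i = 0" for i
    unfolding matrix_vector_mult_def using that by (simp add: sum_nonpos)
  show ?thesis
    using products nonpos Ay unfolding nonneg_vec_def by (simp add: vec_eq_iff) (metis antisym)
qed

lemma nonneg_inner:
  fixes x y :: "real^'n"
  shows "nonneg_vec x \<Longrightarrow> nonneg_vec y \<Longrightarrow> 0 \<le> x \<bullet> y"
  unfolding nonneg_vec_def inner_vec_def by (auto intro: sum_nonneg)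

lemma pos_vec_imp_nonneg_vec: "pos_vec d \<Longrightarrow> nonneg_vec d"
  unfolding pos_vec_def nonneg_vec_def by (simp add: less_imp_le)

lemma nonneg_in_dual_cone_K: "nonneg_vec y \<Longrightarrow> y \<in> dual_cone_K M"
  unfolding dual_cone_K_def cone_K_def using nonneg_inner by auto

lemma pos_vec_interior_dual_cone_K:
  assumes "pos_vec d"
  shows "d \<in> interior (dual_cone_K M)"
proof -
  have "open {y :: real^'n. pos_vec y}"
    unfolding pos_vec_def Collect_all_eq by (auto intro: open_halfspace_component_gt_cart)
  moreover have "{y. pos_vec y} \<subseteq> dual_cone_K M"
    using nonneg_in_dual_cone_K pos_vec_imp_nonneg_vec by blast
  ultimately show ?thesis using assms interior_maximal by blast
qed

lemma zero_in_LCP_sol: "nonneg_vec q \<Longrightarrow> 0 \<in> LCP_sol M q"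
  unfolding LCP_sol_def cone_K_def mat_range_def
  by (auto intro: nonneg_in_dual_cone_K range_eqI[where x = 0])

lemma LCP_sol_pos_eq_zero:
  assumes copos: "\<And>x. x \<in> cone_K M \<Longrightarrow> 0 \<le> x \<bullet> (M *v x)" and d: "pos_vec d"
  shows "LCP_sol M d = {0}"
proof
  show "{0} \<subseteq> LCP_sol M d"
    using zero_in_LCP_sol pos_vec_imp_nonneg_vec[OF d] by simp
  show "LCP_sol M d \<subseteq> {0}"
  proof
    fix x assume "x \<in> LCP_sol M d"
    then have x: "x \<in> cone_K M" and compl: "x \<bullet> (M *v x) + x \<bullet> d = 0"
      unfolding LCP_sol_def by (auto simp: inner_add_right)
    have xn: "nonneg_vec x" using x by (simp add: cone_K_def)
    moreover have "0 \<le> x \<bullet> d" using nonneg_inner xn pos_vec_imp_nonneg_vec[OF d] .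
    ultimately have "(\<Sum>i\<in>UNIV. x $ i * d $ i) = 0"
      using copos[OF x] compl by (simp add: inner_vec_def)
    then have "\<forall>i. x $ i * d $ i = 0"
      using xn pos_vec_imp_nonneg_vec[OF d] sum_nonneg_eq_0_iff[of UNIV "\<lambda>i. x $ i * d $ i"]
      unfolding nonneg_vec_def by simp
    then show "x \<in> {0}" using d unfolding pos_vec_def by (simp add: vec_eq_iff) (metis less_irrefl)
  qed
qed

lemma range_monotone_group_inverse_LCP_sol_0:
  fixes A :: "real^'n^'n"
  assumes Z: "Z_matrix A" and rm: "range_monotone A" and g: "is_group_inverse A X"
  shows "LCP_sol X 0 = {0}"
proof
  show "{0} \<subseteq> LCP_sol X 0" using zero_in_LCP_sol[OF nonneg_vec_0] by simp
  show "LCP_sol X 0 \<subseteq> {0}"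
  proof
    fix x assume "x \<in> LCP_sol X 0"
    then have x: "x \<in> cone_K A" and orth: "x \<bullet> (X *v x) = 0"
      unfolding LCP_sol_def group_inverse_cone_K[OF g] by auto
    define y where "y = X *v x"
    have Ay: "A *v y = x"
      using x group_inverse_right_inverse_on_range[OF g] by (simp add: y_def cone_K_def)
    have "A *v y = 0"
    proof (rule Z_matrix_complementary_zero[OF Z])
      show "nonneg_vec y" using range_monotone_group_inverse_nonneg[OF rm g x] by (simp add: y_def)
      show "nonneg_vec (A *v y)" "(A *v y) \<bullet> y = 0"
        unfolding Ay using x orth by (simp_all add: y_def cone_K_def inner_commute)
    qed
    then show "x \<in> {0}" using Ay by simp
  qed
qed

theorem mainTheorem10:
  fixes A :: "real^'n^'n"
  assumes "Z_matrix A"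
    and "range_monotone A"
    and "{x. nonneg_vec x} \<inter> mat_range A \<noteq> {0}"
  shows "(\<exists>X. is_group_inverse A X) \<and> (\<forall>X. is_group_inverse A X \<longrightarrow> karamardian X)"
proof (intro conjI allI impI)
  show "\<exists>X. is_group_inverse A X" using range_monotone_group_inverse_exists[OF assms(2)] .
next
  fix X :: "real^'n^'n"
  assume g: "is_group_inverse A X"
  have cone: "cone_K X = cone_K A" using group_inverse_cone_K[OF g] .
  have copos: "0 \<le> x \<bullet> (X *v x)" if "x \<in> cone_K X" for x
    using that nonneg_inner[OF _ range_monotone_group_inverse_nonneg[OF assms(2) g]]
    unfolding cone by (simp add: cone_K_def)
  have one: "pos_vec (\<chi> i. 1 :: real^'n)" by (simp add: pos_vec_def)
  show "karamardian X"
    unfolding karamardian_def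
    using assms(3) cone pos_vec_interior_dual_cone_K[OF one]
      range_monotone_group_inverse_LCP_sol_0[OF assms(1,2) g] LCP_sol_pos_eq_zero[OF copos one]
    by (auto simp: cone_K_def)
qed

end
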